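(* For all integers $N\ge 3$ and $2\le k\le N$, $$\alpha\bigl(P^{\mathsf{ucc}}_{k,N}\bigr)^{-1}\;\le\;\frac{N}{N-1}\,\alpha\bigl(P^{\mathsf{ucc}}_{k-1,N-1}\bigr)^{-1}+3\log N.$$
   Context: $\Theta_{k,N}$ denotes the set of $k$-tuples $(x_1,\dots,x_k)\in[N]^k$ with pairwise distinct entries. For $x\in\Theta_{k,N}$, $i\in[k]$, $\ell\in[N]$, define $x^{i,\ell}\in\Theta_{k,N}$: if $\ell\notin\{x_1,\dots,x_k\}$, $x^{i,\ell}$ is $x$ with the $i$-th entry replaced by $\ell$; if $\ell=x_j$ for some $j$, $x^{i,\ell}$ is $x$ with the entries in positions $i$ and $j$ swapped. Uniform $k$-clique $N$-coloring chain $P^{\mathsf{ucc}}_{k,N}$: the Markov chain on $\Theta_{k,N}$ which from state $x$ picks uniformly random $\boldsymbol i\in[k]$ and $\boldsymbol\ell\in[N]$ independently and moves to $x^{\boldsymbol i,\boldsymbol\ell}$. Its stationary distribution is uniform on $\Theta_{k,N}$. Log-Sobolev constant: for an ergodic Markov chain with transition matrix $P$ on finite state space $V$ with stationary distribution $\pi$, $\mathcal E_P(g,g)=\frac12\sum_{x,y\in V}(g(x)-g(y))^2\pi(x)P(x,y)$; for $f:V\to\mathbb R_{\ge 0}$, $\mathrm{Ent}_\pi[f]=\sum_{x}\pi(x)f(x)\log\frac{f(x)}{\mathbb E_\pi[f]}$ (natural log); and $\alpha(P)=\inf\{\mathcal E_P(\sqrt f,\sqrt f)/\mathrm{Ent}_\pi[f]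 : f\ge 0,\ f \text{ non-constant}\}$. *)

theory Defs
  imports Complex_Main
begin

definition dirichlet_form ::
  "'a set \<Rightarrow> ('a \<Rightarrow> real) \<Rightarrow> ('a \<Rightarrow> 'a \<Rightarrow> real) \<Rightarrow> ('a \<Rightarrow> real) \<Rightarrow> real" where
  "dirichlet_form V mu P g =
     (1/2) * (\<Sum>x\<in>V. \<Sum>y\<in>V. (g x - g y)^2 * mu x * P x y)"

definition expect :: "'a set \<Rightarrow> ('a \<Rightarrow> real) \<Rightarrow> ('a \<Rightarrow> real) \<Rightarrow> real" where
  "expect V mu f = (\<Sum>x\<in>V. mu x * f x)"

text \<open>Entropy; note that in Isabelle ln 0 = 0, so terms with f x = 0
contribute 0, matching the convention 0 log 0 = 0.\<close>
definition entropy :: "'a set \<Rightarrow> ('a \<Rightarrow> real) \<Rightarrow> ('a \<Rightarrow> real) \<Rightarrow> real" where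
  "entropy V mu f = (\<Sum>x\<in>V. mu x * f x * ln (f x / expect V mu f))"

definition log_sobolev ::
  "'a set \<Rightarrow> ('a \<Rightarrow> real) \<Rightarrow> ('a \<Rightarrow> 'a \<Rightarrow> real) \<Rightarrow> real" where
  "log_sobolev V mu P =
     Inf {dirichlet_form V mu P (\<lambda>x. sqrt (f x)) / entropy V mu f | f.
            (\<forall>x\<in>V. f x \<ge> 0) \<and> (\<exists>x\<in>V. \<exists>y\<in>V. f x \<noteq> f y)}"

definition Theta :: "nat \<Rightarrow> nat \<Rightarrow> nat list set" where
  "Theta k N = {x. length x = k \<and> distinct x \<and> set x \<subseteq> {1..N}}"

definition move :: "nat list \<Rightarrow> nat \<Rightarrow> nat \<Rightarrow> nat list" where
  "move x i l =
     (if l \<in> set x then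
        (let j = (THE j. j < length x \<and> x ! j = l) in x[i := x ! j, j := x ! i])
      else x[i := l])"

text \<open>Uniform k-clique N-coloring chain: pick i in [k] (here positions 0..k-1)
and l in [N] uniformly and independently.\<close>
definition P_ucc :: "nat \<Rightarrow> nat \<Rightarrow> nat list \<Rightarrow> nat list \<Rightarrow> real" where
  "P_ucc k N x y =
     real (card {(i, l). i < k \<and> l \<in> {1..N} \<and> move x i l = y}) / (real k * real N)"

definition pi_unif :: "nat \<Rightarrow> nat \<Rightarrow> nat list \<Rightarrow> real" where
  "pi_unif k N x = 1 / real (card (Theta k N))"

definition alpha_ucc :: "nat \<Rightarrow> nat \<Rightarrow> real" where
  "alpha_ucc k N = log_sobolev (Theta k N) (pi_unif k N) (P_ucc k N)"

end

theory Submission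
  imports Defs "HOL-Analysis.Convex" "HOL-Analysis.L2_Norm" "HOL-Combinatorics.Transposition"
begin

text \<open>
  Fix a position \<open>j\<close> and split \<open>\<Theta>\<^sub>k\<^sub>,\<^sub>N\<close> into the fibres \<open>x\<^sub>j = c\<close>. By the chain rule the
  entropy is the sum of the entropies inside the fibres plus the entropy of the colour marginal.
  Each fibre is a copy of \<open>\<Theta>\<^sub>k\<^sub>-\<^sub>1\<^sub>,\<^sub>N\<^sub>-\<^sub>1\<close> (delete position \<open>j\<close>, close the gap at \<open>c\<close>), and
  the moves of the smaller chain are exactly the moves \<open>(i,l)\<close> with \<open>i \<noteq> j\<close>, \<open>l \<noteq> c\<close>, so the
  fibre entropies are controlled by the smaller log-Sobolev constant. The marginal is
  controlled by a log-Sobolev inequality for the complete graph on \<open>N\<close> colours with constant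
  \<open>3 log N\<close>, which comes from the pointwise bound \<open>t\<^sup>2 log t\<^sup>2 - t\<^sup>2 + 1 \<le> 3 log N (t - 1)\<^sup>2\<close> on
  \<open>[0, N]\<close>, combined with the coupling of fibres \<open>c\<close> and \<open>c'\<close> by recolouring position \<open>j\<close>.
  Averaging over \<open>j\<close>, each move with \<open>i \<noteq> j\<close> is counted \<open>k - 1\<close> times, which turns the
  normalisation \<open>(k - 1)(N - 1)\<close> of the smaller chain into the factor \<open>N/(N - 1)\<close>.
\<close>

lemma one_le_ln_if_three_le:
  assumes "3 \<le> (M::real)"
  shows "1 \<le> ln M"
proof -
  have "exp 1 \<le> M" using exp_le assms by linarith
  then show ?thesis using assms by (subst ln_ge_iff) auto
qed

lemma two_mul_ln_le_linear:
  fixes M s :: real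
  assumes M: "3 \<le> M" and s: "1 \<le> s" "s \<le> M"
  shows "2 * s * ln s \<le> 3 * ln M * (s - 1)"
proof -
  define R where "R = (\<lambda>s::real. 2 * s * ln s - 3 * ln M * (s - 1))"
  have convex: "convex_on {1..M} R"
  proof (rule convex_on_realI[where f'="\<lambda>s. 2 * ln s + 2 - 3 * ln M"])
    fix x assume "x \<in> {1..M}"
    then show "(R has_real_derivative 2 * ln x + 2 - 3 * ln M) (at x)"
      unfolding R_def by (auto intro!: derivative_eq_intros simp: field_simps)
  qed auto
  define l where "l = (s - 1) / (M - 1)"
  have l: "0 \<le> l" "l \<le> 1" using M s by (auto simp: l_def field_simps)
  have "l * (M - 1) = s - 1" using M by (simp add: l_def)
  then have "(1 - l) *\<^sub>R 1 + l *\<^sub>R M = s" by (simp add: algebra_simps)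
  then have "R s \<le> (1 - l) * R 1 + l * R M"
    using convex_onD[OF convex l, of 1 M] M by auto
  also have "\<dots> = l * (ln M * (3 - M))" by (simp add: R_def algebra_simps)
  also have "\<dots> \<le> 0"
    using M one_le_ln_if_three_le[OF M] l by (intro mult_nonneg_nonpos) auto
  finally show ?thesis by (simp add: R_def)
qed

text \<open>The pointwise inequality behind the log-Sobolev constant \<open>3 log M\<close> of the complete graph.\<close>

lemma sq_ln_sq_le_sq_diff:
  fixes t M :: real
  assumes M: "3 \<le> M" and t: "0 \<le> t" "t \<le> M"
  shows "t\<^sup>2 * ln (t\<^sup>2) - t\<^sup>2 + 1 \<le> 3 * ln M * (t - 1)\<^sup>2"
proof (cases "t \<le> 1")
  case True
  have lnM: "1 \<le> ln M" by (rule one_le_ln_if_three_le[OF M])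
  show ?thesis
  proof (cases "t = 0")
    case False
    then have t_pos: "0 < t" using t by auto
    have "ln t \<le> t - 1" using ln_le_minus_one t_pos by auto
    then have "t\<^sup>2 * ln (t\<^sup>2) \<le> t\<^sup>2 * (2 * (t - 1))"
      using t_pos by (simp add: ln_realpow mult_left_mono)
    then have "t\<^sup>2 * ln (t\<^sup>2) - t\<^sup>2 + 1 \<le> (t - 1)\<^sup>2 * (1 + 2 * t)"
      by (simp add: algebra_simps power2_eq_square)
    also have "\<dots> \<le> (t - 1)\<^sup>2 * (3 * ln M)"
      using True lnM by (intro mult_left_mono) auto
    finally show ?thesis by (simp add: mult.commute)
  qed (use lnM in simp)
next
  case False
  then have t1: "1 \<le> t" by simp
  define Q where "Q = (\<lambda>s::real. 3 * ln M * (s - 1)\<^sup>2 - 2 * s\<^sup>2 * ln s + s\<^sup>2 - 1)"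
  have "Q 1 \<le> Q t"
  proof (rule DERIV_nonneg_imp_increasing_open[OF t1])
    fix x assume x: "1 < x" "x < t"
    have "(Q has_real_derivative 2 * (3 * ln M * (x - 1) - 2 * x * ln x)) (at x)"
      unfolding Q_def using x
      by (auto intro!: derivative_eq_intros simp: field_simps power2_eq_square)
    moreover have "0 \<le> 3 * ln M * (x - 1) - 2 * x * ln x"
      using two_mul_ln_le_linear[OF M, of x] x t by auto
    ultimately show "\<exists>y. DERIV Q x :> y \<and> 0 \<le> y" by auto
  qed (auto simp: Q_def intro!: continuous_intros)
  then show ?thesis using t1 by (simp add: Q_def ln_realpow algebra_simps)
qed

lemma sq_ln_sq_div_le:
  fixes h \<nu> M :: real
  assumes M: "3 \<le> M" and h: "0 \<le> h" "h \<le> M * \<nu>" and \<nu>: "0 < \<nu>"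
  shows "h\<^sup>2 * ln (h\<^sup>2 / \<nu>\<^sup>2) - h\<^sup>2 + \<nu>\<^sup>2 \<le> 3 * ln M * (h - \<nu>)\<^sup>2"
proof -
  define t where "t = h / \<nu>"
  have "0 \<le> t" "t \<le> M" using h \<nu> by (simp_all add: t_def field_simps)
  then have "\<nu>\<^sup>2 * (t\<^sup>2 * ln (t\<^sup>2) - t\<^sup>2 + 1) \<le> \<nu>\<^sup>2 * (3 * ln M * (t - 1)\<^sup>2)"
    using sq_ln_sq_le_sq_diff[OF M] by (intro mult_left_mono) auto
  moreover have "h = t * \<nu>" using \<nu> by (simp add: t_def)
  ultimately show ?thesis using \<nu> by (simp add: power_mult_distrib algebra_simps power2_eq_square)
qed

lemma ln_less_minus_one:
  fixes y :: real
  assumes "0 < y" "y \<noteq> 1"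
  shows "ln y < y - 1"
proof -
  have "ln y = 2 * ln (sqrt y)" using assms by (simp add: ln_sqrt)
  also have "\<dots> \<le> 2 * (sqrt y - 1)" using ln_le_minus_one[of "sqrt y"] assms by simp
  also have "\<dots> < y - 1"
  proof -
    have "0 < (sqrt y - 1)\<^sup>2" using assms by simp
    then show ?thesis using assms by (simp add: power2_diff)
  qed
  finally show ?thesis .
qed

lemma diff_le_mul_ln_div:
  fixes a m :: real
  assumes "0 \<le> a" "0 < m"
  shows "a - m \<le> a * ln (a / m)"
proof (cases "a = 0")
  case False
  then have "a * ln (m / a) \<le> a * (m / a - 1)"
    using assms by (intro mult_left_mono ln_le_minus_one) auto
  moreover have "a * ln (m / a) = - (a * ln (a / m))" "a * (m / a - 1) = m - a"
    using False assms by (simp_all add: ln_div field_simps)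
  ultimately show ?thesis by linarith
qed (use assms in simp)

lemma diff_less_mul_ln_div:
  fixes a m :: real
  assumes "0 \<le> a" "0 < m" "a \<noteq> m"
  shows "a - m < a * ln (a / m)"
proof (cases "a = 0")
  case False
  then have "a * ln (m / a) < a * (m / a - 1)"
    using assms by (intro mult_strict_left_mono ln_less_minus_one) auto
  moreover have "a * ln (m / a) = - (a * ln (a / m))" "a * (m / a - 1) = m - a"
    using False assms by (simp_all add: ln_div field_simps)
  ultimately show ?thesis by linarith
qed (use assms in simp)

lemma sqrt_sum_diff_sq_le:
  fixes a b :: "'x \<Rightarrow> real"
  assumes "\<And>x. x \<in> S \<Longrightarrow> 0 \<le> a x" "\<And>x. x \<in> S \<Longrightarrow> 0 \<le> b x"
  shows "(sqrt (\<Sum>x\<in>S. a x) - sqrt (\<Sum>x\<in>S. b x))\<^sup>2 \<le> (\<Sum>x\<in>S. (sqrt (a x) - sqrt (b x))\<^sup>2)"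
proof -
  let ?u = "\<lambda>x. sqrt (a x)" and ?v = "\<lambda>x. sqrt (b x)"
  let ?D = "L2_set (\<lambda>x. ?u x - ?v x) S"
  have "L2_set ?u S = sqrt (\<Sum>x\<in>S. a x)" "L2_set ?v S = sqrt (\<Sum>x\<in>S. b x)"
    unfolding L2_set_def using assms by (auto intro!: arg_cong[where f=sqrt] sum.cong)
  moreover have "\<bar>L2_set ?u S - L2_set ?v S\<bar> \<le> ?D"
  proof -
    have "L2_set (\<lambda>x. ?v x - ?u x) S = ?D" unfolding L2_set_def by (simp add: power2_commute)
    then show ?thesis
      using L2_set_triangle_ineq[of ?v "\<lambda>x. ?u x - ?v x" S]
        L2_set_triangle_ineq[of ?u "\<lambda>x. ?v x - ?u x" S] by simp
  qed
  then have "(L2_set ?u S - L2_set ?v S)\<^sup>2 \<le> ?D\<^sup>2"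
    by (metis abs_le_square_iff abs_of_nonneg L2_set_nonneg)
  moreover have "?D\<^sup>2 = (\<Sum>x\<in>S. (sqrt (a x) - sqrt (b x))\<^sup>2)"
    unfolding L2_set_def by (simp add: sum_nonneg)
  ultimately show ?thesis by simp
qed

section \<open>Entropy with respect to counting measure\<close>

definition count_entropy :: "'a set \<Rightarrow> ('a \<Rightarrow> real) \<Rightarrow> real" where
  "count_entropy S f = (\<Sum>x\<in>S. f x * ln (f x / ((\<Sum>y\<in>S. f y) / real (card S))))"

lemma entropy_uniform:
  assumes "finite V"
  shows "entropy V (\<lambda>_. 1 / real (card V)) f = count_entropy V f / real (card V)"
proof -
  have "expect V (\<lambda>_. 1 / real (card V)) f = (\<Sum>y\<in>V. f y) / real (card V)"
    by (simp add: expect_def sum_divide_distrib)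
  then show ?thesis by (simp add: entropy_def count_entropy_def sum_divide_distrib)
qed

lemma count_entropy_nonneg:
  assumes fin: "finite S" and nonneg: "\<And>x. x \<in> S \<Longrightarrow> 0 \<le> f x"
  shows "0 \<le> count_entropy S f"
proof (cases "(\<Sum>y\<in>S. f y) = 0")
  case True
  then have "\<forall>x\<in>S. f x = 0" using sum_nonneg_eq_0_iff[OF fin, of f] nonneg by simp
  then show ?thesis by (simp add: count_entropy_def)
next
  case False
  then have "S \<noteq> {}" by auto
  then have "0 < card S" using fin by (simp add: card_gt_0_iff)
  define m where "m = (\<Sum>y\<in>S. f y) / real (card S)"
  have "0 \<le> (\<Sum>y\<in>S. f y)" using nonneg by (simp add: sum_nonneg)
  then have m_pos: "0 < m" using False \<open>0 < card S\<close> by (simp add: m_def)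
  have "0 = (\<Sum>x\<in>S. f x - m)" using \<open>0 < card S\<close> by (simp add: sum_subtractf m_def)
  also have "\<dots> \<le> (\<Sum>x\<in>S. f x * ln (f x / m))"
    using diff_le_mul_ln_div nonneg m_pos by (intro sum_mono) blast
  finally show ?thesis by (simp add: count_entropy_def m_def)
qed

lemma count_entropy_pos:
  assumes fin: "finite S" and nonneg: "\<And>x. x \<in> S \<Longrightarrow> 0 \<le> f x"
    and x12: "x1 \<in> S" "x2 \<in> S" "f x1 \<noteq> f x2"
  shows "0 < count_entropy S f"
proof -
  have "0 < card S" using fin x12 by (auto simp: card_gt_0_iff)
  define m where "m = (\<Sum>y\<in>S. f y) / real (card S)"
  obtain x0 where "x0 \<in> S" "0 < f x0"
    using x12 nonneg by (cases "f x1 = 0") (auto simp: order_less_le)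
  then have "0 < (\<Sum>y\<in>S. f y)" using fin nonneg by (metis sum_pos2)
  then have m_pos: "0 < m" using \<open>0 < card S\<close> by (simp add: m_def)
  obtain x3 where x3: "x3 \<in> S" "f x3 \<noteq> m" using x12 by (cases "f x1 = m") auto
  have "0 = (\<Sum>x\<in>S. f x - m)" using \<open>0 < card S\<close> by (simp add: sum_subtractf m_def)
  also have "\<dots> < (\<Sum>x\<in>S. f x * ln (f x / m))"
  proof (rule sum_strict_mono_ex1[OF fin])
    show "\<forall>x\<in>S. f x - m \<le> f x * ln (f x / m)" using diff_le_mul_ln_div nonneg m_pos by blast
    show "\<exists>x\<in>S. f x - m < f x * ln (f x / m)" using diff_less_mul_ln_div nonneg m_pos x3 by blast
  qed
  finally show ?thesis by (simp add: count_entropy_def m_def)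
qed

lemma count_entropy_const:
  assumes "finite S" "\<And>x. x \<in> S \<Longrightarrow> f x = a"
  shows "count_entropy S f = 0"
proof (cases "S = {}")
  case False
  then have "(\<Sum>y\<in>S. f y) / real (card S) = a" using assms by simp
  then show ?thesis using assms by (simp add: count_entropy_def)
qed (simp add: count_entropy_def)

lemma count_entropy_reindex:
  assumes "bij_betw h S T"
  shows "count_entropy S (\<lambda>x. f (h x)) = count_entropy T f"
proof -
  have "card S = card T" "(\<Sum>y\<in>S. f (h y)) = (\<Sum>y\<in>T. f y)"
    using bij_betw_same_card[OF assms] sum.reindex_bij_betw[OF assms] by simp_all
  then show ?thesis
    unfolding count_entropy_def
    using sum.reindex_bij_betw[OF assms, of "\<lambda>x. f x * ln (f x / ((\<Sum>y\<in>T. f y) / real (card T)))"]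
    by simp
qed

lemma sum_sq_dev_mean_eq_pairs:
  fixes h :: "'a \<Rightarrow> real"
  assumes "finite I" "card I = M" "0 < M"
  shows "(\<Sum>c\<in>I. (h c - (\<Sum>d\<in>I. h d) / M)\<^sup>2) = (\<Sum>c\<in>I. \<Sum>c'\<in>I. (h c - h c')\<^sup>2) / (2 * M)"
proof -
  define S where "S = (\<Sum>d\<in>I. h d)"
  define S2 where "S2 = (\<Sum>d\<in>I. (h d)\<^sup>2)"
  have "(\<Sum>c\<in>I. \<Sum>c'\<in>I. (h c - h c')\<^sup>2) = (\<Sum>c\<in>I. \<Sum>c'\<in>I. (h c)\<^sup>2 + (h c')\<^sup>2 - 2 * h c * h c')"
    by (simp add: power2_diff)
  also have "\<dots> = (\<Sum>c\<in>I. M * (h c)\<^sup>2 + S2 - 2 * h c * S)"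
    using assms by (simp add: sum.distrib sum_subtractf sum_distrib_left S2_def S_def)
  also have "\<dots> = 2 * M * S2 - 2 * S * S"
    using assms by (simp add: sum.distrib sum_subtractf sum_distrib_left sum_distrib_right
        S2_def S_def mult_ac)
  finally have pairs: "(\<Sum>c\<in>I. \<Sum>c'\<in>I. (h c - h c')\<^sup>2) = 2 * M * S2 - 2 * S * S" .
  have "(\<Sum>c\<in>I. (h c - S / M)\<^sup>2) = (\<Sum>c\<in>I. (h c)\<^sup>2 - 2 * (S / M) * h c + (S / M)\<^sup>2)"
    by (intro sum.cong refl) (simp add: power2_diff field_simps)
  also have "\<dots> = S2 - 2 * (S / M) * S + M * (S / M)\<^sup>2"
    using assms by (simp add: sum.distrib sum_subtractf sum_distrib_left S2_def S_def)
  also have "\<dots> = (2 * M * S2 - 2 * S * S) / (2 * M)"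
    using assms by (simp add: field_simps power2_eq_square)
  finally show ?thesis using pairs by (simp add: S_def)
qed

text \<open>The entropy is the minimum over \<open>m > 0\<close> of the right-hand side, attained at the mean.\<close>

lemma count_entropy_le_variational:
  assumes fin: "finite I" and nonneg: "\<And>c. c \<in> I \<Longrightarrow> 0 \<le> F c" and m: "0 < m"
  shows "count_entropy I F \<le> (\<Sum>c\<in>I. F c * ln (F c / m) - F c + m)"
proof (cases "(\<Sum>c\<in>I. F c) = 0")
  case True
  then have "\<forall>c\<in>I. F c = 0" using sum_nonneg_eq_0_iff[OF fin, of F] nonneg by simp
  then show ?thesis using m by (simp add: count_entropy_def)
next
  case False
  define \<mu> where "\<mu> = (\<Sum>c\<in>I. F c) / card I"
  have "0 \<le> (\<Sum>c\<in>I. F c)" using nonneg by (simp add: sum_nonneg)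
  then have sum_pos: "0 < (\<Sum>c\<in>I. F c)" using False by simp
  then have "I \<noteq> {}" by auto
  then have card_pos: "0 < card I" using fin by (simp add: card_gt_0_iff)
  then have \<mu>_pos: "0 < \<mu>" using sum_pos by (simp add: \<mu>_def)
  have split_ln: "F c * ln (F c / \<mu>) = F c * ln (F c / m) + F c * ln (m / \<mu>)" if "c \<in> I" for c
    using nonneg[OF that] \<mu>_pos m by (cases "F c = 0") (simp_all add: ln_div distrib_left[symmetric])
  have "count_entropy I F = (\<Sum>c\<in>I. F c * ln (F c / m)) + (\<Sum>c\<in>I. F c) * ln (m / \<mu>)"
    using split_ln by (simp add: count_entropy_def \<mu>_def[symmetric] sum.distrib sum_distrib_right)
  also have "(\<Sum>c\<in>I. F c) * ln (m / \<mu>) \<le> (\<Sum>c\<in>I. F c) * (m / \<mu> - 1)"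
    using sum_pos \<mu>_pos m by (intro mult_left_mono ln_le_minus_one) auto
  also have "(\<Sum>c\<in>I. F c) * (m / \<mu> - 1) = (\<Sum>c\<in>I. m - F c)"
    using card_pos sum_pos by (simp add: \<mu>_def field_simps sum_subtractf)
  finally show ?thesis by (simp add: sum.distrib sum_subtractf)
qed

text \<open>The log-Sobolev inequality of the complete graph on \<open>I\<close>: take \<open>m = \<nu>\<^sup>2\<close> with \<open>\<nu>\<close> the mean of
  \<open>\<surd>F\<close>, and note \<open>\<surd>(F c) \<le> card I \<cdot> \<nu>\<close>.\<close>

lemma count_entropy_le_pairs:
  fixes F :: "'a \<Rightarrow> real"
  assumes fin: "finite I" and M: "card I = M" "0 < M" and nonneg: "\<And>c. c \<in> I \<Longrightarrow> 0 \<le> F c"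
  shows "count_entropy I F \<le> 3 * ln (max (real M) 3) / (2 * M) *
           (\<Sum>c\<in>I. \<Sum>c'\<in>I. (sqrt (F c) - sqrt (F c'))\<^sup>2)"
proof -
  define h where "h = (\<lambda>c. sqrt (F c))"
  define \<nu> where "\<nu> = (\<Sum>c\<in>I. h c) / M"
  define C where "C = 3 * ln (max (real M) 3)"
  have h_nonneg: "\<And>c. c \<in> I \<Longrightarrow> 0 \<le> h c" by (simp add: h_def nonneg)
  have F_eq: "\<And>c. c \<in> I \<Longrightarrow> F c = (h c)\<^sup>2" using nonneg by (simp add: h_def)
  have "count_entropy I F \<le> (\<Sum>c\<in>I. C * (h c - \<nu>)\<^sup>2)"
  proof (cases "\<nu> = 0")
    case True
    then have "sum h I = 0" using M by (simp add: \<nu>_def)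
    then have "\<forall>c\<in>I. h c = 0" using sum_nonneg_eq_0_iff[OF fin, of h] h_nonneg by simp
    then have "count_entropy I F = 0" using F_eq by (simp add: count_entropy_def)
    moreover have "0 \<le> C" by (simp add: C_def)
    ultimately show ?thesis by (simp add: sum_nonneg)
  next
    case False
    have "0 \<le> \<nu>" using h_nonneg M by (simp add: \<nu>_def sum_nonneg)
    then have \<nu>_pos: "0 < \<nu>" using False by simp
    have "count_entropy I F \<le> (\<Sum>c\<in>I. F c * ln (F c / \<nu>\<^sup>2) - F c + \<nu>\<^sup>2)"
      using \<nu>_pos by (intro count_entropy_le_variational fin nonneg) auto
    also have "\<dots> \<le> (\<Sum>c\<in>I. C * (h c - \<nu>)\<^sup>2)"
    proof (rule sum_mono)
      fix c assume c: "c \<in> I"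
      have "h c \<le> (\<Sum>d\<in>I. h d)" using fin c h_nonneg by (intro member_le_sum) auto
      then have "h c \<le> real M * \<nu>" using M by (simp add: \<nu>_def)
      also have "\<dots> \<le> max (real M) 3 * \<nu>" using \<nu>_pos by (intro mult_right_mono) auto
      finally show "F c * ln (F c / \<nu>\<^sup>2) - F c + \<nu>\<^sup>2 \<le> C * (h c - \<nu>)\<^sup>2"
        using sq_ln_sq_div_le[of "max (real M) 3" "h c" \<nu>] h_nonneg[OF c] \<nu>_pos F_eq[OF c]
        by (simp add: C_def)
    qed
    finally show ?thesis .
  qed
  also have "\<dots> = C * ((\<Sum>c\<in>I. \<Sum>c'\<in>I. (h c - h c')\<^sup>2) / (2 * M))"
    using sum_sq_dev_mean_eq_pairs[OF fin M, of h] by (simp add: sum_distrib_left[symmetric] \<nu>_def)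
  finally show ?thesis by (simp add: C_def h_def)
qed

lemma dirichlet_form_nonneg:
  assumes "\<And>x y. x \<in> V \<Longrightarrow> y \<in> V \<Longrightarrow> 0 \<le> P x y" "\<And>x. x \<in> V \<Longrightarrow> 0 \<le> mu x"
  shows "0 \<le> dirichlet_form V mu P g"
  unfolding dirichlet_form_def using assms by (auto intro!: sum_nonneg mult_nonneg_nonneg)

lemma log_sobolev_uniform_ge:
  assumes fin: "finite V" and two: "x1 \<in> V" "x2 \<in> V" "x1 \<noteq> x2" and B: "0 < B"
    and lsi: "\<And>f. \<forall>x\<in>V. 0 \<le> f x \<Longrightarrow>
        entropy V (\<lambda>_. 1 / real (card V)) f \<le> B * dirichlet_form V (\<lambda>_. 1 / real (card V)) P (\<lambda>x. sqrt (f x))"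
  shows "1 / B \<le> log_sobolev V (\<lambda>_. 1 / real (card V)) P"
proof -
  let ?\<mu> = "\<lambda>_::'a. 1 / real (card V)"
  let ?S = "{dirichlet_form V ?\<mu> P (\<lambda>x. sqrt (f x)) / entropy V ?\<mu> f | f.
            (\<forall>x\<in>V. f x \<ge> 0) \<and> (\<exists>x\<in>V. \<exists>y\<in>V. f x \<noteq> f y)}"
  have "?S \<noteq> {}" using two by (auto intro!: exI[of _ "\<lambda>z. if z = x1 then 1 else 0 :: real"])
  then show ?thesis unfolding log_sobolev_def
  proof (rule cInf_greatest)
    fix z assume "z \<in> ?S"
    then obtain f y1 y2 where z: "z = dirichlet_form V ?\<mu> P (\<lambda>x. sqrt (f x)) / entropy V ?\<mu> f"
      and f: "\<forall>x\<in>V. 0 \<le> f x" "y1 \<in> V" "y2 \<in> V" "f y1 \<noteq> f y2" by auto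
    have "0 < count_entropy V f" using f count_entropy_pos[OF fin] by simp
    moreover have "0 < card V" using fin two by (auto simp: card_gt_0_iff)
    ultimately have "0 < entropy V ?\<mu> f" by (simp add: entropy_uniform[OF fin])
    then show "1 / B \<le> z" unfolding z using lsi[OF f(1)] B by (simp add: divide_simps mult.commute)
  qed
qed

lemma entropy_le_dirichlet_form_div_log_sobolev:
  assumes fin: "finite V" and pos: "0 < log_sobolev V (\<lambda>_. 1 / real (card V)) P"
    and P_nonneg: "\<And>x y. x \<in> V \<Longrightarrow> y \<in> V \<Longrightarrow> 0 \<le> P x y"
    and f: "\<forall>x\<in>V. 0 \<le> f x"
  shows "entropy V (\<lambda>_. 1 / real (card V)) f \<le>
    1 / log_sobolev V (\<lambda>_. 1 / real (card V)) P * dirichlet_form V (\<lambda>_. 1 / real (card V)) P (\<lambda>x. sqrt (f x))"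
proof -
  let ?\<mu> = "\<lambda>_::'a. 1 / real (card V)"
  let ?S = "{dirichlet_form V ?\<mu> P (\<lambda>x. sqrt (f x)) / entropy V ?\<mu> f | f.
            (\<forall>x\<in>V. f x \<ge> 0) \<and> (\<exists>x\<in>V. \<exists>y\<in>V. f x \<noteq> f y)}"
  have df_nonneg: "\<And>g. 0 \<le> dirichlet_form V ?\<mu> P g" by (rule dirichlet_form_nonneg) (use P_nonneg in auto)
  show ?thesis
  proof (cases "\<exists>x\<in>V. \<exists>y\<in>V. f x \<noteq> f y")
    case False
    then obtain a where const: "\<And>x. x \<in> V \<Longrightarrow> f x = a" by metis
    have "entropy V ?\<mu> f = 0" using count_entropy_const[OF fin const] by (simp add: entropy_uniform[OF fin])
    then show ?thesis using df_nonneg pos by simp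
  next
    case True
    then obtain x1 x2 where x12: "x1 \<in> V" "x2 \<in> V" "f x1 \<noteq> f x2" by blast
    have "bdd_below ?S"
    proof (rule bdd_belowI[of _ 0])
      fix z assume "z \<in> ?S"
      then obtain g where "z = dirichlet_form V ?\<mu> P (\<lambda>x. sqrt (g x)) / entropy V ?\<mu> g"
        and "\<forall>x\<in>V. g x \<ge> 0" by auto
      then show "0 \<le> z" using df_nonneg count_entropy_nonneg[OF fin] by (simp add: entropy_uniform[OF fin])
    qed
    then have "log_sobolev V ?\<mu> P \<le> dirichlet_form V ?\<mu> P (\<lambda>x. sqrt (f x)) / entropy V ?\<mu> f"
      unfolding log_sobolev_def using True f by (intro cInf_lower) auto
    moreover have "0 < card V" using fin x12 by (auto simp: card_gt_0_iff)
    then have "0 < entropy V ?\<mu> f"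
      using count_entropy_pos[OF fin _ x12] f by (simp add: entropy_uniform[OF fin])
    ultimately show ?thesis using pos by (simp add: divide_simps mult.commute)
  qed
qed

lemma finite_Theta: "finite (Theta k N)"
proof (rule finite_subset)
  show "Theta k N \<subseteq> {xs. set xs \<subseteq> {1..N} \<and> length xs = k}" by (auto simp: Theta_def)
qed (simp add: finite_lists_length_eq)

lemma upt_in_Theta: "k \<le> N \<Longrightarrow> [1..<Suc k] \<in> Theta k N"
  by (auto simp: Theta_def)

lemma card_Theta_pos: "k \<le> N \<Longrightarrow> 0 < card (Theta k N)"
  using upt_in_Theta finite_Theta card_gt_0_iff by fastforce

lemma map_transpose_in_Theta:
  assumes "x \<in> Theta k N" "a \<in> {1..N}" "b \<in> {1..N}"
  shows "map (Transposition.transpose a b) x \<in> Theta k N"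
  using assms by (auto simp: Theta_def distinct_map transpose_def)

lemma move_eq_map_transpose:
  assumes "distinct x" "i < length x"
  shows "move x i l = map (Transposition.transpose (x ! i) l) x"
proof (cases "l \<in> set x")
  case True
  then obtain p where p: "p < length x" "x ! p = l" by (auto simp: in_set_conv_nth)
  then have "(THE j. j < length x \<and> x ! j = l) = p"
    using assms by (auto intro!: the_equality simp: nth_eq_iff_index_eq)
  with True p assms show ?thesis
    by (intro nth_equalityI)
       (auto simp: move_def Let_def transpose_def nth_list_update nth_eq_iff_index_eq)
next
  case False
  with assms show ?thesis
    by (intro nth_equalityI) (auto simp: move_def transpose_def nth_list_update nth_eq_iff_index_eq)
qed

lemma move_in_Theta:
  assumes x: "x \<in> Theta k N" and "i < k" "l \<in> {1..N}"
  shows "move x i l \<in> Theta k N"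
proof -
  have "x ! i \<in> set x" using assms by (intro nth_mem) (simp add: Theta_def)
  then have "x ! i \<in> {1..N}" using x by (auto simp: Theta_def)
  moreover have "move x i l = map (Transposition.transpose (x ! i) l) x"
    using assms by (intro move_eq_map_transpose) (auto simp: Theta_def)
  ultimately show ?thesis using map_transpose_in_Theta[OF x] assms by simp
qed

lemma P_ucc_nonneg: "0 \<le> P_ucc k N x y"
  by (simp add: P_ucc_def)

lemma pi_unif_eq: "pi_unif k N = (\<lambda>_. 1 / real (card (Theta k N)))"
  by (simp add: pi_unif_def fun_eq_iff)

lemma entropy_Theta:
  "entropy (Theta k N) (pi_unif k N) f = count_entropy (Theta k N) f / real (card (Theta k N))"
  unfolding pi_unif_eq by (rule entropy_uniform[OF finite_Theta])

definition dirichlet_sum :: "nat \<Rightarrow> nat \<Rightarrow> (nat list \<Rightarrow> real) \<Rightarrow> real" where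
  "dirichlet_sum k N g = (\<Sum>x\<in>Theta k N. \<Sum>i<k. \<Sum>l\<in>{1..N}. (g x - g (move x i l))\<^sup>2)"

lemma sum_mult_card_fibres:
  fixes m :: "'p \<Rightarrow> 'v" and w :: "'v \<Rightarrow> real"
  assumes "finite T" "finite V" "m ` T \<subseteq> V"
  shows "(\<Sum>y\<in>V. w y * real (card {p \<in> T. m p = y})) = (\<Sum>p\<in>T. w (m p))"
  using sum.group[OF assms, of "\<lambda>p. w (m p)"] by (simp add: mult.commute)

lemma dirichlet_form_ucc:
  "dirichlet_form (Theta k N) (pi_unif k N) (P_ucc k N) g
     = dirichlet_sum k N g / (2 * real (card (Theta k N)) * real k * real N)"
proof -
  let ?V = "Theta k N" and ?T = "{..<k} \<times> {1..N}"
  have inner: "(\<Sum>y\<in>?V. (g x - g y)\<^sup>2 * real (card {(i, l). i < k \<and> l \<in> {1..N} \<and> move x i l = y}))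
        = (\<Sum>i<k. \<Sum>l\<in>{1..N}. (g x - g (move x i l))\<^sup>2)" if "x \<in> ?V" for x
  proof -
    have "\<And>y. {(i, l). i < k \<and> l \<in> {1..N} \<and> move x i l = y} = {p \<in> ?T. move x (fst p) (snd p) = y}"
      by auto
    moreover have "(\<Sum>y\<in>?V. (g x - g y)\<^sup>2 * real (card {p \<in> ?T. move x (fst p) (snd p) = y}))
          = (\<Sum>p\<in>?T. (g x - g (move x (fst p) (snd p)))\<^sup>2)"
      using that move_in_Theta finite_Theta by (intro sum_mult_card_fibres) auto
    ultimately show ?thesis by (simp add: sum.cartesian_product case_prod_beta)
  qed
  have "dirichlet_form ?V (pi_unif k N) (P_ucc k N) g
     = (1/2) * (\<Sum>x\<in>?V. (1 / real (card ?V)) / (real k * real N) *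
          (\<Sum>y\<in>?V. (g x - g y)\<^sup>2 * real (card {(i, l). i < k \<and> l \<in> {1..N} \<and> move x i l = y})))"
    unfolding dirichlet_form_def pi_unif_def P_ucc_def
    by (simp add: sum_distrib_left mult.commute mult.left_commute)
  also have "\<dots> = dirichlet_sum k N g / (2 * real (card ?V) * real k * real N)"
    using inner by (simp add: dirichlet_sum_def sum_distrib_left[symmetric] sum_divide_distrib[symmetric])
  finally show ?thesis .
qed

section \<open>Fibres over a fixed position\<close>

definition fibre :: "nat \<Rightarrow> nat \<Rightarrow> nat \<Rightarrow> nat \<Rightarrow> nat list set" where
  "fibre k N j c = {x \<in> Theta k N. x ! j = c}"

lemma finite_fibre: "finite (fibre k N j c)"
  by (rule finite_subset[OF _ finite_Theta]) (auto simp: fibre_def)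

lemma sum_Theta_fibres:
  assumes "j < k"
  shows "(\<Sum>x\<in>Theta k N. g x) = (\<Sum>c\<in>{1..N}. \<Sum>x\<in>fibre k N j c. g x)"
proof -
  have "(\<lambda>x. x ! j) ` Theta k N \<subseteq> {1..N}"
    using assms nth_mem by (fastforce simp: Theta_def)
  from sum.group[OF finite_Theta finite_atLeastAtMost this, of g] show ?thesis
    by (simp add: fibre_def)
qed

definition skip :: "nat \<Rightarrow> nat \<Rightarrow> nat" where
  "skip c a = (if a < c then a else Suc a)"

definition unskip :: "nat \<Rightarrow> nat \<Rightarrow> nat" where
  "unskip c a = (if a < c then a else a - 1)"

lemma skip_neq: "skip c a \<noteq> c"
  by (simp add: skip_def)

lemma inj_skip: "inj (skip c)"
  by (rule injI) (auto simp: skip_def split: if_splits)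

lemma unskip_skip: "unskip c (skip c a) = a"
  by (simp add: skip_def unskip_def)

lemma skip_unskip: "a \<noteq> c \<Longrightarrow> skip c (unskip c a) = a"
  by (auto simp: skip_def unskip_def)

lemma inj_on_unskip: "inj_on (unskip c) (- {c})"
  by (rule inj_onI) (metis ComplD insertI1 skip_unskip)

lemma skip_transpose:
  "skip c (Transposition.transpose a b z) = Transposition.transpose (skip c a) (skip c b) (skip c z)"
  using inj_skip[of c] by (auto simp: transpose_def inj_eq)

lemma bij_betw_skip_indices: "j < k \<Longrightarrow> bij_betw (skip j) {..<k - 1} ({..<k} - {j})"
  by (rule bij_betw_byWitness[where f'="unskip j"]) (auto simp: skip_def unskip_def)

lemma bij_betw_skip_colours: "c \<in> {1..N} \<Longrightarrow> bij_betw (skip c) {1..N - 1} ({1..N} - {c})"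
  by (rule bij_betw_byWitness[where f'="unskip c"]) (auto simp: skip_def unskip_def)

definition insert_at :: "nat \<Rightarrow> nat \<Rightarrow> nat list \<Rightarrow> nat list" where
  "insert_at j c x = take j (map (skip c) x) @ c # drop j (map (skip c) x)"

definition remove_at :: "nat \<Rightarrow> nat \<Rightarrow> nat list \<Rightarrow> nat list" where
  "remove_at j c x = map (unskip c) (take j x @ drop (Suc j) x)"

lemma insert_at_in_fibre:
  assumes j: "j < k" and c: "c \<in> {1..N}" and x: "x \<in> Theta (k - 1) (N - 1)"
  shows "insert_at j c x \<in> fibre k N j c"
proof -
  let ?y = "map (skip c) x"
  have length_y: "length ?y = k - 1" using x by (simp add: Theta_def)
  have distinct_y: "distinct ?y" using x inj_skip by (simp add: Theta_def distinct_map inj_on_def inj_def)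
  have c_notin: "c \<notin> set ?y" by (force simp: skip_def)
  have "\<forall>a\<in>set x. 1 \<le> a \<and> a \<le> N - 1" using x by (auto simp: Theta_def)
  then have "set ?y \<subseteq> {1..N}" by (auto simp: skip_def)
  then have "set (insert_at j c x) \<subseteq> {1..N}"
    using c set_take_subset[of j ?y] set_drop_subset[of j ?y] by (auto simp: insert_at_def)
  moreover have "distinct (insert_at j c x)"
    using set_take_disj_set_drop_if_distinct[OF distinct_y] distinct_y c_notin
      in_set_takeD[of _ j ?y] in_set_dropD[of _ j ?y]
    by (auto simp: insert_at_def distinct_append)
  moreover have "length (insert_at j c x) = k" "insert_at j c x ! j = c"
    using length_y j by (simp_all add: insert_at_def nth_append)
  ultimately show ?thesis by (simp add: fibre_def Theta_def)
qed

lemma fibre_decomp: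
  assumes x: "x \<in> fibre k N j c" and j: "j < k"
  shows "x = take j x @ c # drop (Suc j) x"
    "distinct (take j x @ drop (Suc j) x)" "c \<notin> set (take j x @ drop (Suc j) x)"
proof -
  show x_eq: "x = take j x @ c # drop (Suc j) x"
    using id_take_nth_drop[of j x] x j by (simp add: fibre_def Theta_def)
  have "distinct x" using x by (simp add: fibre_def Theta_def)
  then have "distinct (take j x @ c # drop (Suc j) x)" using x_eq by simp
  then show "distinct (take j x @ drop (Suc j) x)" "c \<notin> set (take j x @ drop (Suc j) x)"
    by (auto simp: distinct_append)
qed

lemma remove_at_in_Theta:
  assumes j: "j < k" and c: "c \<in> {1..N}" and x: "x \<in> fibre k N j c"
  shows "remove_at j c x \<in> Theta (k - 1) (N - 1)"
proof -
  let ?L = "take j x @ drop (Suc j) x"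
  note decomp = fibre_decomp[OF x j]
  have "set ?L \<subseteq> set x" using set_take_subset[of j x] set_drop_subset[of "Suc j" x] by auto
  then have L_colours: "\<And>a. a \<in> set ?L \<Longrightarrow> a \<in> {1..N} \<and> a \<noteq> c"
    using x decomp(3) by (auto simp: fibre_def Theta_def)
  have "distinct (remove_at j c x)"
    unfolding remove_at_def distinct_map using decomp(2,3) inj_on_subset[OF inj_on_unskip[of c]] by auto
  moreover have "length (remove_at j c x) = k - 1" using x j by (simp add: remove_at_def fibre_def Theta_def)
  moreover have "set (remove_at j c x) \<subseteq> {1..N - 1}"
  proof
    fix b assume "b \<in> set (remove_at j c x)"
    then obtain a where a: "a \<in> set ?L" "b = unskip c a" by (auto simp: remove_at_def)
    then have "a \<in> {1..N}" "a \<noteq> c" using L_colours by auto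
    then show "b \<in> {1..N - 1}" using a c by (auto simp: unskip_def)
  qed
  ultimately show ?thesis by (simp add: Theta_def)
qed

lemma insert_at_remove_at:
  assumes j: "j < k" and x: "x \<in> fibre k N j c"
  shows "insert_at j c (remove_at j c x) = x"
proof -
  let ?L = "take j x @ drop (Suc j) x"
  note decomp = fibre_decomp[OF x j]
  have "length x = k" using x by (simp add: fibre_def Theta_def)
  moreover have "map (skip c) (remove_at j c x) = ?L"
    using decomp(3) by (auto simp: remove_at_def intro!: map_idI skip_unskip)
  ultimately show ?thesis using decomp(1) j by (simp add: insert_at_def)
qed

lemma remove_at_insert_at:
  assumes "j < k" "x \<in> Theta (k - 1) (N - 1)"
  shows "remove_at j c (insert_at j c x) = x"
  using assms by (simp add: remove_at_def insert_at_def Theta_def unskip_skip map_idI)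

lemma bij_betw_insert_at:
  assumes "j < k" "c \<in> {1..N}"
  shows "bij_betw (insert_at j c) (Theta (k - 1) (N - 1)) (fibre k N j c)"
  using assms insert_at_in_fibre remove_at_in_Theta insert_at_remove_at remove_at_insert_at
  by (intro bij_betw_byWitness[where f'="remove_at j c"]) auto

lemma card_fibre:
  assumes "j < k" "c \<in> {1..N}"
  shows "card (fibre k N j c) = card (Theta (k - 1) (N - 1))"
  using bij_betw_same_card[OF bij_betw_insert_at[OF assms]] by simp

lemma card_Theta_eq:
  assumes "j < k"
  shows "real (card (Theta k N)) = real N * real (card (Theta (k - 1) (N - 1)))"
  using sum_Theta_fibres[OF assms, of "\<lambda>_. 1::real"] card_fibre[OF assms] by simp

lemma insert_at_nth:
  assumes j: "j < k" and x: "x \<in> Theta (k - 1) (N - 1)" and i: "i < k - 1"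
  shows "insert_at j c x ! skip j i = skip c (x ! i)"
proof -
  have length_y: "length (map (skip c) x) = k - 1" using x by (simp add: Theta_def)
  show ?thesis
  proof (cases "i < j")
    case False
    then have "Suc i - j = Suc (i - j)" by simp
    then show ?thesis using False length_y i j by (simp add: insert_at_def skip_def nth_append)
  qed (use length_y i j in \<open>simp add: insert_at_def skip_def nth_append\<close>)
qed

lemma insert_at_move:
  assumes j: "j < k" and c: "c \<in> {1..N}" and x: "x \<in> Theta (k - 1) (N - 1)" and i: "i < k - 1"
  shows "insert_at j c (move x i l) = move (insert_at j c x) (skip j i) (skip c l)"
proof -
  let ?T = "Transposition.transpose (skip c (x ! i)) (skip c l)"
  have "map (skip c) (move x i l) = map ?T (map (skip c) x)"
    using x i by (simp add: move_eq_map_transpose Theta_def skip_transpose)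
  moreover have "?T c = c" using skip_neq by (metis transpose_apply_other)
  moreover have "insert_at j c x \<in> fibre k N j c" by (rule insert_at_in_fibre[OF j c x])
  then have "move (insert_at j c x) (skip j i) (skip c l) = map ?T (insert_at j c x)"
    using move_eq_map_transpose insert_at_nth[OF j x i] j i
    by (auto simp: fibre_def Theta_def skip_def)
  ultimately show ?thesis by (simp add: insert_at_def take_map drop_map)
qed

section \<open>Chain rule and the two entropy bounds\<close>

lemma count_entropy_chain_rule:
  assumes j: "j < k" and kN: "k \<le> N" and nonneg: "\<And>x. x \<in> Theta k N \<Longrightarrow> 0 \<le> f x"
  shows "count_entropy (Theta k N) f = (\<Sum>c\<in>{1..N}. count_entropy (fibre k N j c) f)
          + real (card (Theta (k - 1) (N - 1))) *
            count_entropy {1..N} (\<lambda>c. (\<Sum>x\<in>fibre k N j c. f x) / real (card (Theta (k - 1) (N - 1))))"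
proof -
  define n' where "n' = real (card (Theta (k - 1) (N - 1)))"
  define s where "s = (\<lambda>c. \<Sum>x\<in>fibre k N j c. f x)"
  define m where "m = (\<Sum>x\<in>Theta k N. f x) / real (card (Theta k N))"
  have n'_pos: "0 < n'" using card_Theta_pos kN by (simp add: n'_def)
  have card_eq: "real (card (Theta k N)) = real N * n'"
    unfolding n'_def by (rule card_Theta_eq[OF j])
  have sum_eq: "(\<Sum>x\<in>Theta k N. f x) = (\<Sum>c\<in>{1..N}. s c)"
    unfolding s_def by (rule sum_Theta_fibres[OF j])
  have mean_eq: "(\<Sum>c\<in>{1..N}. s c / n') / real (card {1..N}) = m"
    unfolding m_def card_eq sum_eq using n'_pos by (simp add: sum_divide_distrib[symmetric])
  have split_ln: "f x * ln (f x / m) = f x * ln (f x / (s c / n')) + f x * ln (s c / n' / m)"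
    if c: "c \<in> {1..N}" and x: "x \<in> fibre k N j c" for c x
  proof (cases "f x = 0")
    case False
    have x_Theta: "x \<in> Theta k N" using x by (simp add: fibre_def)
    then have fx_pos: "0 < f x" using False nonneg by (simp add: order_less_le)
    have "f x \<le> s c"
      unfolding s_def using x nonneg finite_fibre by (intro member_le_sum) (auto simp: fibre_def)
    moreover have "s c \<le> (\<Sum>c\<in>{1..N}. s c)"
      using c nonneg by (intro member_le_sum) (auto simp: s_def fibre_def intro!: sum_nonneg)
    ultimately have "0 < s c" "0 < m"
      using fx_pos n'_pos kN j by (auto simp: m_def card_eq sum_eq)
    then show ?thesis using fx_pos n'_pos by (simp add: ln_div ln_mult distrib_left[symmetric])
  qed simp
  have "count_entropy (Theta k N) f = (\<Sum>c\<in>{1..N}. \<Sum>x\<in>fibre k N j c. f x * ln (f x / m))"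
    unfolding count_entropy_def m_def[symmetric] by (rule sum_Theta_fibres[OF j])
  also have "\<dots> = (\<Sum>c\<in>{1..N}. count_entropy (fibre k N j c) f + s c * ln (s c / n' / m))"
    using split_ln card_fibre[OF j]
    by (intro sum.cong refl) (simp add: sum.distrib count_entropy_def n'_def s_def sum_distrib_right)
  also have "\<dots> = (\<Sum>c\<in>{1..N}. count_entropy (fibre k N j c) f) + n' * count_entropy {1..N} (\<lambda>c. s c / n')"
    unfolding count_entropy_def mean_eq using n'_pos by (simp add: sum.distrib sum_distrib_left)
  finally show ?thesis by (simp add: n'_def s_def)
qed

definition edge_energy :: "(nat list \<Rightarrow> real) \<Rightarrow> nat list \<Rightarrow> nat \<Rightarrow> nat \<Rightarrow> real" where
  "edge_energy f x i l = (sqrt (f x) - sqrt (f (move x i l)))\<^sup>2"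

lemma edge_energy_nonneg: "0 \<le> edge_energy f x i l"
  by (simp add: edge_energy_def)

lemma dirichlet_sum_sqrt: "dirichlet_sum k N (\<lambda>x. sqrt (f x))
    = (\<Sum>x\<in>Theta k N. \<Sum>i<k. \<Sum>l\<in>{1..N}. edge_energy f x i l)"
  by (simp add: dirichlet_sum_def edge_energy_def)

lemma dirichlet_sum_insert_at:
  assumes j: "j < k" and c: "c \<in> {1..N}"
  shows "dirichlet_sum (k - 1) (N - 1) (\<lambda>x'. sqrt (f (insert_at j c x')))
       = (\<Sum>x\<in>fibre k N j c. \<Sum>i\<in>{..<k} - {j}. \<Sum>l\<in>{1..N} - {c}. edge_energy f x i l)"
proof -
  have "dirichlet_sum (k - 1) (N - 1) (\<lambda>x'. sqrt (f (insert_at j c x')))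
      = (\<Sum>x'\<in>Theta (k - 1) (N - 1). \<Sum>i<k - 1. \<Sum>l\<in>{1..N - 1}.
           edge_energy f (insert_at j c x') (skip j i) (skip c l))"
    unfolding dirichlet_sum_def edge_energy_def by (intro sum.cong refl) (simp add: insert_at_move[OF j c])
  also have "\<dots> = (\<Sum>x'\<in>Theta (k - 1) (N - 1). \<Sum>i\<in>{..<k} - {j}. \<Sum>l\<in>{1..N} - {c}.
           edge_energy f (insert_at j c x') i l)"
    by (intro sum.cong refl trans[OF sum.reindex_bij_betw[OF bij_betw_skip_indices[OF j]]]
        sum.reindex_bij_betw[OF bij_betw_skip_colours[OF c]])
  also have "\<dots> = (\<Sum>x\<in>fibre k N j c. \<Sum>i\<in>{..<k} - {j}. \<Sum>l\<in>{1..N} - {c}. edge_energy f x i l)"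
    by (rule sum.reindex_bij_betw[OF bij_betw_insert_at[OF j c]])
  finally show ?thesis .
qed

definition ucc_lsi :: "nat \<Rightarrow> nat \<Rightarrow> real \<Rightarrow> bool" where
  "ucc_lsi k N A \<longleftrightarrow> (\<forall>f. (\<forall>x\<in>Theta k N. 0 \<le> f x) \<longrightarrow>
      entropy (Theta k N) (pi_unif k N) f
        \<le> A * dirichlet_form (Theta k N) (pi_unif k N) (P_ucc k N) (\<lambda>x. sqrt (f x)))"

lemma count_entropy_fibre_le:
  assumes j: "j < k" and c: "c \<in> {1..N}" and kN: "k \<le> N"
    and lsi: "ucc_lsi (k - 1) (N - 1) A" and nonneg: "\<And>x. x \<in> Theta k N \<Longrightarrow> 0 \<le> f x"
  shows "count_entropy (fibre k N j c) f
    \<le> A * (\<Sum>x\<in>fibre k N j c. \<Sum>i\<in>{..<k} - {j}. \<Sum>l\<in>{1..N} - {c}. edge_energy f x i l)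
        / (2 * real (k - 1) * real (N - 1))"
proof -
  define n' where "n' = real (card (Theta (k - 1) (N - 1)))"
  have n'_pos: "0 < n'" using card_Theta_pos kN by (simp add: n'_def)
  let ?g = "\<lambda>x'. f (insert_at j c x')"
  have "\<forall>x\<in>Theta (k - 1) (N - 1). 0 \<le> ?g x"
    using insert_at_in_fibre[OF j c] nonneg by (auto simp: fibre_def)
  then have "entropy (Theta (k - 1) (N - 1)) (pi_unif (k - 1) (N - 1)) ?g
      \<le> A * dirichlet_form (Theta (k - 1) (N - 1)) (pi_unif (k - 1) (N - 1))
             (P_ucc (k - 1) (N - 1)) (\<lambda>x. sqrt (?g x))"
    using lsi[unfolded ucc_lsi_def, THEN spec[where x="?g"]] by blast
  then have "count_entropy (Theta (k - 1) (N - 1)) ?g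
      \<le> A * dirichlet_sum (k - 1) (N - 1) (\<lambda>x. sqrt (?g x)) / (2 * real (k - 1) * real (N - 1))"
    using n'_pos by (simp add: entropy_Theta dirichlet_form_ucc n'_def field_simps)
  moreover have "count_entropy (Theta (k - 1) (N - 1)) ?g = count_entropy (fibre k N j c) f"
    by (rule count_entropy_reindex[OF bij_betw_insert_at[OF j c]])
  ultimately show ?thesis unfolding dirichlet_sum_insert_at[OF j c, symmetric] by simp
qed

text \<open>Recolouring position \<open>j\<close> from \<open>c\<close> to \<open>c'\<close> maps the fibre over \<open>c\<close> bijectively onto the fibre over \<open>c'\<close>.\<close>

lemma sqrt_fibre_mass_diff_le:
  assumes j: "j < k" and c: "c \<in> {1..N}" and c': "c' \<in> {1..N}"
    and nonneg: "\<And>x. x \<in> Theta k N \<Longrightarrow> 0 \<le> f x" and n'_pos: "0 < n'"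
  shows "(sqrt ((\<Sum>x\<in>fibre k N j c. f x) / n') - sqrt ((\<Sum>x\<in>fibre k N j c'. f x) / n'))\<^sup>2
        \<le> (\<Sum>x\<in>fibre k N j c. edge_energy f x j c') / n'"
proof -
  let ?\<tau> = "map (Transposition.transpose c c')"
  have move_eq: "\<And>x. x \<in> fibre k N j c \<Longrightarrow> move x j c' = ?\<tau> x"
    using move_eq_map_transpose j by (auto simp: fibre_def Theta_def)
  have maps_to: "?\<tau> ` fibre k N j d \<subseteq> fibre k N j (Transposition.transpose c c' d)" for d
  proof
    fix y assume "y \<in> ?\<tau> ` fibre k N j d"
    then obtain x where x: "x \<in> Theta k N" "x ! j = d" "y = ?\<tau> x" by (auto simp: fibre_def)
    then have "j < length x" using j by (simp add: Theta_def)
    then show "y \<in> fibre k N j (Transposition.transpose c c' d)"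
      using map_transpose_in_Theta[OF x(1) c c'] x by (simp add: fibre_def)
  qed
  have "bij_betw ?\<tau> (fibre k N j c) (fibre k N j c')"
    using maps_to[of c] maps_to[of c'] by (intro bij_betw_byWitness[where f'="?\<tau>"]) (auto intro: map_idI)
  then have mass': "(\<Sum>x\<in>fibre k N j c'. f x) = (\<Sum>x\<in>fibre k N j c. f (move x j c'))"
    using sum.reindex_bij_betw[of ?\<tau> _ _ f] move_eq by simp
  have "(sqrt (\<Sum>x\<in>fibre k N j c. f x) - sqrt (\<Sum>x\<in>fibre k N j c. f (move x j c')))\<^sup>2
       \<le> (\<Sum>x\<in>fibre k N j c. edge_energy f x j c')"
    unfolding edge_energy_def using nonneg move_in_Theta[OF _ j c']
    by (intro sqrt_sum_diff_sq_le) (auto simp: fibre_def)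
  then show ?thesis
    using n'_pos unfolding mass'
    by (simp add: real_sqrt_divide power_divide diff_divide_distrib[symmetric] divide_right_mono)
qed

lemma count_entropy_marginal_le:
  assumes j: "j < k" and kN: "k \<le> N" and nonneg: "\<And>x. x \<in> Theta k N \<Longrightarrow> 0 \<le> f x"
  shows "real (card (Theta (k - 1) (N - 1))) *
           count_entropy {1..N} (\<lambda>c. (\<Sum>x\<in>fibre k N j c. f x) / real (card (Theta (k - 1) (N - 1))))
         \<le> 3 * ln (max (real N) 3) / (2 * real N) * (\<Sum>x\<in>Theta k N. \<Sum>l\<in>{1..N}. edge_energy f x j l)"
proof -
  define n' where "n' = real (card (Theta (k - 1) (N - 1)))"
  define C where "C = 3 * ln (max (real N) 3) / (2 * real N)"
  define mass where "mass = (\<lambda>c. (\<Sum>x\<in>fibre k N j c. f x) / n')"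
  have n'_pos: "0 < n'" using card_Theta_pos kN by (simp add: n'_def)
  have C_nonneg: "0 \<le> C" by (simp add: C_def)
  have "\<And>c. c \<in> {1..N} \<Longrightarrow> 0 \<le> mass c"
    unfolding mass_def using n'_pos nonneg by (auto simp: fibre_def intro!: divide_nonneg_pos sum_nonneg)
  then have "count_entropy {1..N} mass
      \<le> C * (\<Sum>c\<in>{1..N}. \<Sum>c'\<in>{1..N}. (sqrt (mass c) - sqrt (mass c'))\<^sup>2)"
    using count_entropy_le_pairs[of "{1..N}" N mass] j kN by (simp add: C_def)
  also have "\<dots> \<le> C * (\<Sum>c\<in>{1..N}. \<Sum>c'\<in>{1..N}. (\<Sum>x\<in>fibre k N j c. edge_energy f x j c') / n')"
    unfolding mass_def using C_nonneg
    by (intro mult_left_mono sum_mono sqrt_fibre_mass_diff_le[OF j _ _ nonneg n'_pos]) auto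
  also have "(\<Sum>c\<in>{1..N}. \<Sum>c'\<in>{1..N}. (\<Sum>x\<in>fibre k N j c. edge_energy f x j c') / n')
      = (\<Sum>x\<in>Theta k N. \<Sum>l\<in>{1..N}. edge_energy f x j l) / n'"
  proof -
    have "(\<Sum>c\<in>{1..N}. \<Sum>c'\<in>{1..N}. \<Sum>x\<in>fibre k N j c. edge_energy f x j c')
        = (\<Sum>c\<in>{1..N}. \<Sum>x\<in>fibre k N j c. \<Sum>l\<in>{1..N}. edge_energy f x j l)"
      by (rule sum.cong[OF refl], rule sum.swap)
    then show ?thesis by (simp add: sum_Theta_fibres[OF j] sum_divide_distrib[symmetric])
  qed
  finally have "n' * count_entropy {1..N} mass
      \<le> n' * (C * ((\<Sum>x\<in>Theta k N. \<Sum>l\<in>{1..N}. edge_energy f x j l) / n'))"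
    using n'_pos by (intro mult_left_mono) auto
  also have "\<dots> = C * (\<Sum>x\<in>Theta k N. \<Sum>l\<in>{1..N}. edge_energy f x j l)"
    using n'_pos by simp
  finally show ?thesis by (simp add: n'_def mass_def C_def)
qed

lemma count_entropy_le_position:
  assumes j: "j < k" and kN: "k \<le> N" and A: "0 \<le> A"
    and lsi: "ucc_lsi (k - 1) (N - 1) A" and nonneg: "\<And>x. x \<in> Theta k N \<Longrightarrow> 0 \<le> f x"
  shows "count_entropy (Theta k N) f
    \<le> A / (2 * real (k - 1) * real (N - 1)) * (\<Sum>x\<in>Theta k N. \<Sum>i\<in>{..<k} - {j}. \<Sum>l\<in>{1..N}. edge_energy f x i l)
      + 3 * ln (max (real N) 3) / (2 * real N) * (\<Sum>x\<in>Theta k N. \<Sum>l\<in>{1..N}. edge_energy f x j l)"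
proof -
  define a where "a = A / (2 * real (k - 1) * real (N - 1))"
  have "(\<Sum>c\<in>{1..N}. count_entropy (fibre k N j c) f)
      \<le> (\<Sum>c\<in>{1..N}. a * (\<Sum>x\<in>fibre k N j c. \<Sum>i\<in>{..<k} - {j}. \<Sum>l\<in>{1..N} - {c}. edge_energy f x i l))"
    using count_entropy_fibre_le[OF j _ kN lsi nonneg] by (intro sum_mono) (simp add: a_def)
  also have "\<dots> \<le> (\<Sum>c\<in>{1..N}. a * (\<Sum>x\<in>fibre k N j c. \<Sum>i\<in>{..<k} - {j}. \<Sum>l\<in>{1..N}. edge_energy f x i l))"
    using A by (intro sum_mono mult_left_mono sum_mono2) (auto simp: a_def edge_energy_nonneg)
  also have "\<dots> = a * (\<Sum>x\<in>Theta k N. \<Sum>i\<in>{..<k} - {j}. \<Sum>l\<in>{1..N}. edge_energy f x i l)"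
    by (simp add: sum_Theta_fibres[OF j] sum_distrib_left)
  finally have "(\<Sum>c\<in>{1..N}. count_entropy (fibre k N j c) f)
      \<le> a * (\<Sum>x\<in>Theta k N. \<Sum>i\<in>{..<k} - {j}. \<Sum>l\<in>{1..N}. edge_energy f x i l)" .
  moreover have "count_entropy (Theta k N) f = (\<Sum>c\<in>{1..N}. count_entropy (fibre k N j c) f)
          + real (card (Theta (k - 1) (N - 1))) *
            count_entropy {1..N} (\<lambda>c. (\<Sum>x\<in>fibre k N j c. f x) / real (card (Theta (k - 1) (N - 1))))"
    using j kN nonneg by (rule count_entropy_chain_rule)
  moreover have "real (card (Theta (k - 1) (N - 1))) *
           count_entropy {1..N} (\<lambda>c. (\<Sum>x\<in>fibre k N j c. f x) / real (card (Theta (k - 1) (N - 1))))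
         \<le> 3 * ln (max (real N) 3) / (2 * real N) * (\<Sum>x\<in>Theta k N. \<Sum>l\<in>{1..N}. edge_energy f x j l)"
    using j kN nonneg by (rule count_entropy_marginal_le)
  ultimately show ?thesis unfolding a_def by linarith
qed

section \<open>The recursion for the log-Sobolev bound\<close>

lemma sum_remove_index:
  fixes T :: "'a \<Rightarrow> nat \<Rightarrow> real"
  shows "(\<Sum>j<k. \<Sum>x\<in>S. \<Sum>i\<in>{..<k} - {j}. T x i) = real (k - 1) * (\<Sum>x\<in>S. \<Sum>i<k. T x i)"
proof -
  have "(\<Sum>j<k. \<Sum>x\<in>S. \<Sum>i\<in>{..<k} - {j}. T x i) = (\<Sum>x\<in>S. \<Sum>j<k. (\<Sum>i<k. T x i) - T x j)"
    by (simp add: sum_diff1 sum.swap[of _ "{..<k}"])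
  also have "\<dots> = (\<Sum>x\<in>S. real (k - 1) * (\<Sum>i<k. T x i))"
    by (intro sum.cong refl) (cases k, auto simp: sum_subtractf algebra_simps)
  finally show ?thesis by (simp add: sum_distrib_left)
qed

lemma count_entropy_le_dirichlet_sum:
  assumes k: "1 \<le> k" and kN: "k \<le> N" and N: "2 \<le> N"
    and A: "0 \<le> A" and lsi: "ucc_lsi (k - 1) (N - 1) A" and nonneg: "\<And>x. x \<in> Theta k N \<Longrightarrow> 0 \<le> f x"
  shows "real k * count_entropy (Theta k N) f
    \<le> (A / (2 * (real N - 1)) + 3 * ln (max (real N) 3) / (2 * real N)) * dirichlet_sum k N (\<lambda>x. sqrt (f x))"
proof -
  define a where "a = A / (2 * real (k - 1) * real (N - 1))"
  define b where "b = 3 * ln (max (real N) 3) / (2 * real N)"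
  define D where "D = dirichlet_sum k N (\<lambda>x. sqrt (f x))"
  have per_position: "count_entropy (Theta k N) f
      \<le> a * (\<Sum>x\<in>Theta k N. \<Sum>i\<in>{..<k} - {j}. \<Sum>l\<in>{1..N}. edge_energy f x i l)
        + b * (\<Sum>x\<in>Theta k N. \<Sum>l\<in>{1..N}. edge_energy f x j l)" if "j < k" for j
    unfolding a_def b_def using that kN A lsi nonneg by (rule count_entropy_le_position)
  have off_diagonal: "(\<Sum>j<k. \<Sum>x\<in>Theta k N. \<Sum>i\<in>{..<k} - {j}. \<Sum>l\<in>{1..N}. edge_energy f x i l)
      = real (k - 1) * D"
    unfolding D_def dirichlet_sum_sqrt by (rule sum_remove_index)
  have diagonal: "(\<Sum>j<k. \<Sum>x\<in>Theta k N. \<Sum>l\<in>{1..N}. edge_energy f x j l) = D"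
    unfolding D_def dirichlet_sum_sqrt by (rule sum.swap)
  have a_bound: "a * real (k - 1) \<le> A / (2 * (real N - 1))"
  proof (cases "k = 1")
    case False
    define p where "p = real (k - 1)"
    have "0 < p" using False k by (simp add: p_def)
    then have "a * p = A / (2 * real (N - 1))" unfolding a_def p_def[symmetric] by simp
    then show ?thesis using N by (simp add: p_def of_nat_diff)
  qed (use A N in simp)
  have "real k * count_entropy (Theta k N) f = (\<Sum>j<k. count_entropy (Theta k N) f)" by simp
  also have "\<dots> \<le> (\<Sum>j<k. a * (\<Sum>x\<in>Theta k N. \<Sum>i\<in>{..<k} - {j}. \<Sum>l\<in>{1..N}. edge_energy f x i l)
                 + b * (\<Sum>x\<in>Theta k N. \<Sum>l\<in>{1..N}. edge_energy f x j l))"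
    using per_position by (intro sum_mono) simp
  also have "\<dots> = a * real (k - 1) * D + b * D"
    by (simp only: sum.distrib sum_distrib_left[symmetric] off_diagonal diagonal mult.assoc)
  also have "\<dots> \<le> (A / (2 * (real N - 1)) + b) * D"
    unfolding distrib_right
    using mult_right_mono[OF a_bound] by (simp add: D_def dirichlet_sum_def sum_nonneg)
  finally show ?thesis by (simp add: b_def D_def)
qed

lemma ucc_lsi_step:
  assumes k: "1 \<le> k" and kN: "k \<le> N" and N: "2 \<le> N"
    and A: "0 \<le> A" and lsi: "ucc_lsi (k - 1) (N - 1) A"
  shows "ucc_lsi k N (real N / (real N - 1) * A + 3 * ln (max (real N) 3))"
  unfolding ucc_lsi_def
proof (intro allI impI)
  fix f :: "nat list \<Rightarrow> real" assume "\<forall>x\<in>Theta k N. 0 \<le> f x"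
  define K where "K = real N / (real N - 1) * A + 3 * ln (max (real N) 3)"
  define D where "D = dirichlet_sum k N (\<lambda>x. sqrt (f x))"
  define n where "n = real (card (Theta k N))"
  have "A / (2 * (real N - 1)) + 3 * ln (max (real N) 3) / (2 * real N) = K / (2 * real N)"
    using N by (simp add: K_def field_simps)
  then have "real k * count_entropy (Theta k N) f \<le> K / (2 * real N) * D"
    unfolding D_def using \<open>\<forall>x\<in>Theta k N. 0 \<le> f x\<close> k kN N A lsi
    by (metis count_entropy_le_dirichlet_sum)
  then have "real k * count_entropy (Theta k N) f / (real k * n) \<le> K / (2 * real N) * D / (real k * n)"
    by (intro divide_right_mono mult_nonneg_nonneg) (auto simp: n_def)
  moreover have "0 < real k" using k by simp
  ultimately have "count_entropy (Theta k N) f / n \<le> K / (2 * real N) * D / (real k * n)" by simp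
  also have "\<dots> = K * (D / (2 * n * real k * real N))" by (simp add: field_simps)
  finally show "entropy (Theta k N) (pi_unif k N) f \<le> K *
      dirichlet_form (Theta k N) (pi_unif k N) (P_ucc k N) (\<lambda>x. sqrt (f x))"
    by (simp add: entropy_Theta dirichlet_form_ucc D_def n_def)
qed

lemma ucc_lsi_singleton:
  assumes "Theta k N = {v}"
  shows "ucc_lsi k N 0"
  unfolding ucc_lsi_def
proof (intro allI impI)
  fix f :: "nat list \<Rightarrow> real"
  have "count_entropy (Theta k N) f = 0" using assms by (intro count_entropy_const[where a="f v"]) auto
  then show "entropy (Theta k N) (pi_unif k N) f
      \<le> 0 * dirichlet_form (Theta k N) (pi_unif k N) (P_ucc k N) (\<lambda>x. sqrt (f x))"
    by (simp add: entropy_Theta)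
qed

lemma ucc_lsi_exists: "k \<le> N \<Longrightarrow> \<exists>A\<ge>0. ucc_lsi k N A"
proof (induction k arbitrary: N)
  case 0
  have "Theta 0 N = {[]}" by (auto simp: Theta_def)
  then show ?case using ucc_lsi_singleton by blast
next
  case (Suc k)
  show ?case
  proof (cases "N = 1")
    case True
    then have "Theta (Suc k) N = {[1]}"
      using Suc.prems by (auto simp: Theta_def length_Suc_conv)
    then show ?thesis using ucc_lsi_singleton by blast
  next
    case False
    have "k \<le> N - 1" using Suc.prems by simp
    then obtain A where A: "0 \<le> A" "ucc_lsi k (N - 1) A" using Suc.IH by blast
    have "2 \<le> N" using Suc.prems False by simp
    then have "ucc_lsi (Suc k) N (real N / (real N - 1) * A + 3 * ln (max (real N) 3))"
      using ucc_lsi_step[of "Suc k" N A] Suc.prems A by simp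
    moreover have "0 \<le> real N / (real N - 1) * A + 3 * ln (max (real N) 3)"
      using A \<open>2 \<le> N\<close> by (intro add_nonneg_nonneg mult_nonneg_nonneg) auto
    ultimately show ?thesis by blast
  qed
qed

lemma ucc_lsi_mono:
  assumes "ucc_lsi k N A" "A \<le> A'"
  shows "ucc_lsi k N A'"
proof -
  have "0 \<le> dirichlet_form (Theta k N) (pi_unif k N) (P_ucc k N) g" for g
    by (rule dirichlet_form_nonneg) (simp_all add: P_ucc_nonneg pi_unif_def)
  then show ?thesis
    using assms unfolding ucc_lsi_def by (blast intro: order_trans mult_right_mono)
qed

lemma alpha_ucc_ge:
  assumes "1 \<le> k" "k \<le> N" "2 \<le> N" and B: "0 < B" and lsi: "ucc_lsi k N B"
  shows "1 / B \<le> alpha_ucc k N"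
proof -
  let ?x = "[1..<Suc k]" and ?\<tau> = "Transposition.transpose (1::nat) 2"
  have x: "?x \<in> Theta k N" using assms by (intro upt_in_Theta)
  have y: "map ?\<tau> ?x \<in> Theta k N" using assms by (intro map_transpose_in_Theta[OF x]) auto
  have xy: "?x \<noteq> map ?\<tau> ?x"
  proof -
    have "?x = 1 # [Suc 1..<Suc k]" using assms by (simp add: upt_conv_Cons del: upt_Suc)
    then show ?thesis by (simp del: upt_Suc)
  qed
  show ?thesis
    unfolding alpha_ucc_def pi_unif_eq
    by (rule log_sobolev_uniform_ge[OF finite_Theta x y xy B]) (use lsi in \<open>simp add: ucc_lsi_def pi_unif_eq\<close>)
qed

lemma ucc_lsi_alpha_ucc:
  assumes "0 < alpha_ucc k N"
  shows "ucc_lsi k N (1 / alpha_ucc k N)"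
  using entropy_le_dirichlet_form_div_log_sobolev[OF finite_Theta, where P="P_ucc k N"] assms P_ucc_nonneg
  unfolding ucc_lsi_def alpha_ucc_def pi_unif_eq by simp

lemma alpha_ucc_pos:
  assumes "1 \<le> k" "k \<le> N" "2 \<le> N"
  shows "0 < alpha_ucc k N"
proof -
  obtain A where "0 \<le> A" "ucc_lsi k N A" using ucc_lsi_exists assms by blast
  then have "1 / (A + 1) \<le> alpha_ucc k N"
    using assms ucc_lsi_mono by (intro alpha_ucc_ge) auto
  moreover have "0 < 1 / (A + 1)" using \<open>0 \<le> A\<close> by simp
  ultimately show ?thesis by linarith
qed

theorem mainTheorem6:
  fixes N k :: nat
  assumes "N \<ge> 3" and "2 \<le> k" and "k \<le> N"
  shows "1 / alpha_ucc k N
           \<le> real N / (real N - 1) * (1 / alpha_ucc (k - 1) (N - 1)) + 3 * ln (real N)"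
proof -
  define B where "B = real N / (real N - 1) * (1 / alpha_ucc (k - 1) (N - 1)) + 3 * ln (real N)"
  have alpha'_pos: "0 < alpha_ucc (k - 1) (N - 1)" using assms by (intro alpha_ucc_pos) auto
  then have "ucc_lsi (k - 1) (N - 1) (1 / alpha_ucc (k - 1) (N - 1))" by (rule ucc_lsi_alpha_ucc)
  then have "ucc_lsi k N (real N / (real N - 1) * (1 / alpha_ucc (k - 1) (N - 1)) + 3 * ln (max (real N) 3))"
    using assms alpha'_pos by (intro ucc_lsi_step) auto
  moreover have "max (real N) 3 = real N" using assms by simp
  ultimately have lsi: "ucc_lsi k N B" by (simp add: B_def)
  have B_pos: "0 < B"
    unfolding B_def using assms alpha'_pos by (intro add_nonneg_pos mult_nonneg_nonneg) auto
  then have "1 / B \<le> alpha_ucc k N" using assms lsi by (intro alpha_ucc_ge) auto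
  moreover have "0 < 1 / B" using B_pos by simp
  ultimately have "0 < alpha_ucc k N" "1 / B \<le> alpha_ucc k N" by linarith+
  then have "1 / alpha_ucc k N \<le> 1 / (1 / B)" using B_pos by (intro divide_left_mono) auto
  then show ?thesis using B_pos by (simp add: B_def)
qed

end
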